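(* Let $F$, $G$ and $\Pi$ be as in the context. If $S\subset\Sigma_A\times I$ is an attracting (resp. repelling) strip with respect to $G$ and $B$ is its maximal attractor (resp. maximal repeller), then $\Pi(B)$ is the maximal attractor (resp. maximal repeller) of the bi-strip $\Pi(S)$, which is attracting (resp. repelling) with respect to $F$.
   Context: $I=[0,1]$, $R(x)=1-x$. $F(\xi,p)=(\sigma(\xi),f_{\xi_0}(p))$ on $\Sigma_N\times I$, $\Sigma_N=\{1,\ldots,N\}^{\mathbb Z}$, with $f_i$ $C^1$-diffeomorphisms onto their images. $\mathcal I_P$ / $\mathcal I_R$: indices of orientation preserving / reversing $f_i$. $A=(a_{ij})_{i,j=1}^{2N}$ with $a_{ij}=1$ if ($i\in\mathcal I_P$, $j\le N$), or ($i\in\mathcal I_R$, $j>N$), or ($i-N\in\mathcal I_P$, $j>N$), or ($i-N\in\mathcal I_R$, $j\le N$), else $0$; $\Sigma_A$ the $A$-admissible sequences in $\{1,\ldots,2N\}^{\mathbb Z}$ with shift $\sigma_A$; $\pi(\omega)_n=\overline{\omega_n}$ ($\overline i=i$ for $i\le N$, $\overline i=i-N$ otherwise). $G(\omega,x)=(\sigma_A(\omega),g_{\omega_0}(x))$ with $g_i=f_i$, $g_{i+N}=R\circ f_i\circ R$ ($i\in\mathcal I_P$), $g_i=R\circ f_i$, $g_{i+N}=f_i\circ R$ ($i\in\mathcal I_R$). $C=\{\omega\colon\omega_0\le N\}$; $\Pi(\omega,x)=(\pi(\omega),x)$ if $\omega\in C$, $(\pi(\omega),R(x))$ otherwise. Strips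 $S_{\varphi,\psi}=\{(\omega,x)\colon\varphi(\omega)\le x\le\psi(\omega)\}$ for $\varphi<\psi$ pointwise; bi-strip = union of two strips. For a step skew-product $H$, a (bi-)strip $S$ is attracting if $H(S)\subset\operatorname{int}S$, repelling if $H^{-1}$ is defined on $S$ and $H^{-1}(S)\subset\operatorname{int}S$. The maximal attractor of an attracting $S$ is $\bigcap_{n\ge0}H^n(S)$; the maximal repeller of a repelling $S$ is $\bigcap_{n\ge0}H^{-n}(S)$ (maximal attractor for $H^{-1}$). *)

theory Defs
  imports "HOL-Analysis.Analysis"
begin

type_synonym seq = "int \<Rightarrow> nat"

definition II :: "real set" where "II = {0..1}"

definition RR :: "real \<Rightarrow> real" where "RR x = 1 - x"

definition C1_diffeo_onto_image :: "(real \<Rightarrow> real) \<Rightarrow> bool" where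
  "C1_diffeo_onto_image h \<longleftrightarrow> h ` II \<subseteq> II \<and> inj_on h II \<and>
     (\<exists>h'. (\<forall>x\<in>II. (h has_real_derivative h' x) (at x within II)) \<and>
           continuous_on II h' \<and> (\<forall>x\<in>II. h' x \<noteq> 0))"

definition IP :: "nat \<Rightarrow> (nat \<Rightarrow> real \<Rightarrow> real) \<Rightarrow> nat set" where
  "IP N f = {i\<in>{1..N}. \<forall>x\<in>II. \<forall>y\<in>II. x < y \<longrightarrow> f i x < f i y}"

definition IR :: "nat \<Rightarrow> (nat \<Rightarrow> real \<Rightarrow> real) \<Rightarrow> nat set" where
  "IR N f = {i\<in>{1..N}. \<forall>x\<in>II. \<forall>y\<in>II. x < y \<longrightarrow> f i y < f i x}"

definition SigmaN :: "nat \<Rightarrow> seq set" where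
  "SigmaN N = {\<xi>. \<forall>n. \<xi> n \<in> {1..N}}"

definition shift :: "seq \<Rightarrow> seq" where "shift \<xi> = (\<lambda>n. \<xi> (n + 1))"

definition amat :: "nat \<Rightarrow> (nat \<Rightarrow> real \<Rightarrow> real) \<Rightarrow> nat \<Rightarrow> nat \<Rightarrow> bool" where
  "amat N f i j \<longleftrightarrow> i \<in> {1..2*N} \<and> j \<in> {1..2*N} \<and>
     ((i \<in> IP N f \<and> j \<le> N) \<or> (i \<in> IR N f \<and> j > N) \<or>
      (i > N \<and> i - N \<in> IP N f \<and> j > N) \<or> (i > N \<and> i - N \<in> IR N f \<and> j \<le> N))"

definition SigmaA :: "nat \<Rightarrow> (nat \<Rightarrow> real \<Rightarrow> real) \<Rightarrow> seq set" where
  "SigmaA N f = {\<omega>. \<forall>n. \<omega> n \<in> {1..2*N} \<and> amat N f (\<omega> n) (\<omega> (n + 1))}"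

definition bar :: "nat \<Rightarrow> nat \<Rightarrow> nat" where
  "bar N i = (if i \<le> N then i else i - N)"

definition proj :: "nat \<Rightarrow> seq \<Rightarrow> seq" where
  "proj N \<omega> = (\<lambda>n. bar N (\<omega> n))"

definition FF :: "(nat \<Rightarrow> real \<Rightarrow> real) \<Rightarrow> seq \<times> real \<Rightarrow> seq \<times> real" where
  "FF f = (\<lambda>(\<xi>, p). (shift \<xi>, f (\<xi> 0) p))"

definition gmap :: "nat \<Rightarrow> (nat \<Rightarrow> real \<Rightarrow> real) \<Rightarrow> nat \<Rightarrow> real \<Rightarrow> real" where
  "gmap N f k = (if k \<le> N then
       (if k \<in> IP N f then f k else RR \<circ> f k)
     else
       (if k - N \<in> IP N f then RR \<circ> f (k - N) \<circ> RR else f (k - N) \<circ> RR))"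

definition GG :: "nat \<Rightarrow> (nat \<Rightarrow> real \<Rightarrow> real) \<Rightarrow> seq \<times> real \<Rightarrow> seq \<times> real" where
  "GG N f = (\<lambda>(\<omega>, x). (shift \<omega>, gmap N f (\<omega> 0) x))"

definition Pi_map :: "nat \<Rightarrow> seq \<times> real \<Rightarrow> seq \<times> real" where
  "Pi_map N = (\<lambda>(\<omega>, x). if \<omega> 0 \<le> N then (proj N \<omega>, x) else (proj N \<omega>, RR x))"

definition strip :: "seq set \<Rightarrow> (seq \<Rightarrow> real) \<Rightarrow> (seq \<Rightarrow> real) \<Rightarrow> (seq \<times> real) set" where
  "strip D \<phi> \<psi> = {(\<omega>, x). \<omega> \<in> D \<and> \<phi> \<omega> \<le> x \<and> x \<le> \<psi> \<omega>}"

definition is_strip :: "seq set \<Rightarrow> (seq \<times> real) set \<Rightarrow> bool" where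
  "is_strip D S \<longleftrightarrow> (\<exists>\<phi> \<psi>. (\<forall>\<omega>\<in>D. 0 \<le> \<phi> \<omega> \<and> \<phi> \<omega> < \<psi> \<omega> \<and> \<psi> \<omega> \<le> 1)
                          \<and> S = strip D \<phi> \<psi>)"

definition is_bistrip :: "seq set \<Rightarrow> (seq \<times> real) set \<Rightarrow> bool" where
  "is_bistrip D S \<longleftrightarrow> (\<exists>S1 S2. is_strip D S1 \<and> is_strip D S2 \<and> S = S1 \<union> S2)"

definition rel_int :: "(seq \<times> real) set \<Rightarrow> (seq \<times> real) set \<Rightarrow> (seq \<times> real) set" where
  "rel_int X S = (top_of_set X) interior_of S"

definition attracting :: "(seq \<times> real \<Rightarrow> seq \<times> real) \<Rightarrow> (seq \<times> real) set \<Rightarrow> (seq \<times> real) set \<Rightarrow> bool" where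
  "attracting H X S \<longleftrightarrow> H ` S \<subseteq> rel_int X S"

definition preim :: "(seq \<times> real \<Rightarrow> seq \<times> real) \<Rightarrow> (seq \<times> real) set \<Rightarrow> (seq \<times> real) set \<Rightarrow> (seq \<times> real) set" where
  "preim H X A = {p \<in> X. H p \<in> A}"

definition repelling :: "(seq \<times> real \<Rightarrow> seq \<times> real) \<Rightarrow> (seq \<times> real) set \<Rightarrow> (seq \<times> real) set \<Rightarrow> bool" where
  "repelling H X S \<longleftrightarrow> S \<subseteq> H ` X \<and> preim H X S \<subseteq> rel_int X S"

definition max_attractor :: "(seq \<times> real \<Rightarrow> seq \<times> real) \<Rightarrow> (seq \<times> real) set \<Rightarrow> (seq \<times> real) set" where
  "max_attractor H S = (\<Inter>n. ((\<lambda>A. H ` A) ^^ n) S)"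

definition max_repeller :: "(seq \<times> real \<Rightarrow> seq \<times> real) \<Rightarrow> (seq \<times> real) set \<Rightarrow> (seq \<times> real) set \<Rightarrow> (seq \<times> real) set" where
  "max_repeller H X S = (\<Inter>n. ((\<lambda>A. preim H X A) ^^ n) S)"

end

theory Submission
  imports Defs
begin

(* Pi_map restricted to either sheet, \<omega> 0 \<le> N or N < \<omega> 0, of SigmaA N f \<times> II is a homeomorphism onto
   SigmaN N \<times> II: once the sheet of the 0-th symbol is fixed, a sequence \<xi> in SigmaN N has exactly one
   lift to SigmaA N f, whose n-th symbol changes sheet at each orientation reversing map f (\<xi> k)
   with k between 0 and n.  Moreover Pi_map \<circ> G = F \<circ> Pi_map.  Hence Pi_map carries images, preimages
   and relative interiors for G to those for F and, its fibres having two points, commutes with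
   the intersection of a decreasing sequence of sets.  The image of the strip is the union of the
   images of its two sheets, each of which is a strip. *)

lemma continuous_on_finitely_determined:
  fixes g :: "('i \<Rightarrow> 'a::discrete_topology) \<Rightarrow> 'j \<Rightarrow> 'b::topological_space"
  assumes "\<And>j. \<exists>K. finite K \<and> (\<forall>x y. (\<forall>k\<in>K. x k = y k) \<longrightarrow> g x j = g y j)"
  shows "continuous_on UNIV g"
proof (rule continuous_on_coordinatewise_then_product)
  fix j
  obtain K where K: "finite K" "\<And>x y. \<forall>k\<in>K. x k = y k \<Longrightarrow> g x j = g y j"
    using assms by blast
  show "continuous_on UNIV (\<lambda>x. g x j)"
    unfolding continuous_on_topological
  proof (intro ballI allI impI)
    fix x B assume "open B" "g x j \<in> B"
    define cyl where "cyl = (\<Inter>k\<in>K. (\<lambda>y. y k) -` {x k})"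
    have "open ((\<lambda>y. y k) -` {x k})" for k
      by (rule open_vimage[OF open_discrete continuous_on_product_coordinates])
    then have "open cyl"
      unfolding cyl_def using \<open>finite K\<close> by blast
    moreover have "g y j \<in> B" if "y \<in> cyl" for y
    proof -
      have "\<forall>k\<in>K. y k = x k" using that unfolding cyl_def by simp
      then show ?thesis using K(2) \<open>g x j \<in> B\<close> by metis
    qed
    ultimately show "\<exists>A. open A \<and> x \<in> A \<and> (\<forall>y\<in>UNIV. y \<in> A \<longrightarrow> g y j \<in> B)"
      unfolding cyl_def by blast
  qed
qed

lemma ex_all_antimono_finite:
  fixes P :: "'c::finite \<Rightarrow> nat \<Rightarrow> bool"
  assumes antimono: "\<And>c m n. m \<le> n \<Longrightarrow> P c n \<Longrightarrow> P c m" and ex: "\<And>n. \<exists>c. P c n"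
  shows "\<exists>c. \<forall>n. P c n"
proof (rule ccontr)
  assume "\<nexists>c. \<forall>n. P c n"
  then obtain fail where fail: "\<And>c. \<not> P c (fail c)" by metis
  obtain c where "P c (Max (range fail))" using ex by blast
  then have "P c (fail c)" by (rule antimono[rotated]) simp
  with fail show False by blast
qed

lemma ex_bool_xor: "(\<exists>c. P (c \<noteq> b)) \<longleftrightarrow> (\<exists>c::bool. P c)" for b :: bool
proof
  assume "\<exists>c. P c"
  then obtain c where "P c" by blast
  then show "\<exists>c. P (c \<noteq> b)"
    by (cases b) (auto intro: exI[of _ "\<not> c"] exI[of _ c])
qed blast

lemma funpow_semiconj:
  assumes "\<And>x. x \<in> P \<Longrightarrow> h (f x) = g (h x)" and "\<And>x. x \<in> P \<Longrightarrow> f x \<in> P" and "x \<in> P"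
  shows "h ((f ^^ n) x) = (g ^^ n) (h x)"
proof -
  have "(f ^^ n) x \<in> P \<and> h ((f ^^ n) x) = (g ^^ n) (h x)"
    by (induction n) (use assms in auto)
  then show ?thesis ..
qed

lemma decseq_funpow:
  fixes S :: "'a::order"
  assumes "mono \<phi>" and "\<phi> S \<le> S"
  shows "decseq (\<lambda>n. (\<phi> ^^ n) S)"
proof (rule decseq_SucI)
  fix n show "(\<phi> ^^ Suc n) S \<le> (\<phi> ^^ n) S"
    by (induction n) (use assms in \<open>auto intro: monoD\<close>)
qed

lemma interior_of_image_section:
  assumes L: "continuous_on UNIV L" "L ` Y \<subseteq> X" "\<And>q. q \<in> Y \<Longrightarrow> h (L q) = q"
    and p: "p \<in> (top_of_set X) interior_of S" "h p \<in> Y" "L (h p) = p"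
  shows "h p \<in> (top_of_set Y) interior_of (h ` S)"
proof -
  obtain U where U: "open U" "p \<in> U" "U \<inter> X \<subseteq> S"
    using p(1) unfolding interior_of_def openin_open by blast
  have "open (L -` U)" using open_vimage[OF U(1) L(1)] .
  moreover have "h p \<in> L -` U" using p(3) U(2) by simp
  moreover have "L -` U \<inter> Y \<subseteq> h ` S"
  proof
    fix q assume q: "q \<in> L -` U \<inter> Y"
    then have "L q \<in> S" using L(2) U(3) by blast
    then show "q \<in> h ` S" using L(3) q by (metis IntD2 image_eqI)
  qed
  ultimately show ?thesis
    using p(2) unfolding interior_of_def openin_open by blast
qed

lemma IP_IR_disjoint: "i \<in> IP N f \<Longrightarrow> i \<notin> IR N f"
proof
  assume "i \<in> IP N f" "i \<in> IR N f"
  moreover have "(0::real) \<in> II" "(1::real) \<in> II" by (auto simp: II_def)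
  ultimately have "f i 0 < f i 1" "f i 1 < f i 0" unfolding IP_def IR_def by auto
  then show False by simp
qed

lemma C1_diffeo_IP_or_IR:
  assumes "C1_diffeo_onto_image (f i)" and "i \<in> {1..N}"
  shows "i \<in> IP N f \<or> i \<in> IR N f"
proof -
  obtain h' where deriv: "\<forall>x\<in>II. (f i has_real_derivative h' x) (at x within II)"
    and inj: "inj_on (f i) II"
    using assms(1) unfolding C1_diffeo_onto_image_def by blast
  have "continuous_on II (f i)"
    using deriv DERIV_continuous continuous_on_eq_continuous_within by blast
  moreover have "is_interval II" by (simp add: II_def is_interval_cc)
  ultimately have "strict_mono_on II (f i) \<or> strict_antimono_on II (f i)"
    using inj injective_eq_monotone_map by blast
  then show ?thesis
    using assms(2) unfolding IP_def IR_def monotone_on_def by auto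
qed

lemma IP_subset: "IP N f \<subseteq> {1..N}"
  unfolding IP_def by blast

lemma IR_subset: "IR N f \<subseteq> {1..N}"
  unfolding IR_def by blast

lemma proj_SigmaN:
  assumes "\<omega> \<in> SigmaA N f"
  shows "proj N \<omega> \<in> SigmaN N"
proof -
  have range: "\<omega> n \<in> {1..2*N}" for n using assms unfolding SigmaA_def by blast
  have "bar N (\<omega> n) \<in> {1..N}" for n using range[of n] unfolding bar_def by auto
  then show ?thesis unfolding SigmaN_def proj_def by blast
qed

lemma Pi_map_mem_UNIV: "p \<in> SigmaA N f \<times> UNIV \<Longrightarrow> Pi_map N p \<in> SigmaN N \<times> UNIV"
  using proj_SigmaN by (auto simp: Pi_map_def)

lemma Pi_map_mem_II: "p \<in> SigmaA N f \<times> II \<Longrightarrow> Pi_map N p \<in> SigmaN N \<times> II"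
  using proj_SigmaN by (auto simp: Pi_map_def II_def RR_def)

lemma shift_SigmaA:
  assumes "\<omega> \<in> SigmaA N f"
  shows "shift \<omega> \<in> SigmaA N f"
proof -
  have "\<omega> (n + 1) \<in> {1..2*N} \<and> amat N f (\<omega> (n + 1)) (\<omega> (n + 1 + 1))" for n
    using assms unfolding SigmaA_def by blast
  then show ?thesis unfolding SigmaA_def shift_def by blast
qed

lemma shift_SigmaN: "\<xi> \<in> SigmaN N \<Longrightarrow> shift \<xi> \<in> SigmaN N"
  unfolding SigmaN_def shift_def by simp

lemma strip_subset: "is_strip D S \<Longrightarrow> S \<subseteq> D \<times> II"
  unfolding is_strip_def strip_def II_def by fastforce

lemma rel_int_subset: "rel_int X S \<subseteq> S"
  unfolding rel_int_def by (rule interior_of_subset)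

lemma RR_RR [simp]: "RR (RR y) = y"
  by (simp add: RR_def)

lemma fst_GG: "fst (GG N f p) = shift (fst p)"
  by (simp add: GG_def split: prod.split)

lemma fst_GG_SigmaA: "fst p \<in> SigmaA N f \<Longrightarrow> fst (GG N f p) \<in> SigmaA N f"
  by (simp add: fst_GG shift_SigmaA)

lemma GG_mem_UNIV: "p \<in> SigmaA N f \<times> UNIV \<Longrightarrow> GG N f p \<in> SigmaA N f \<times> UNIV"
  using fst_GG_SigmaA by (simp add: mem_Times_iff)

lemma fst_FF_SigmaN: "fst q \<in> SigmaN N \<Longrightarrow> fst (FF f q) \<in> SigmaN N"
  by (auto simp: FF_def shift_SigmaN split: prod.split)

locale oriented_fibre_maps =
  fixes N :: nat and f :: "nat \<Rightarrow> real \<Rightarrow> real"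
  assumes IP_or_IR: "i \<in> {1..N} \<Longrightarrow> i \<in> IP N f \<or> i \<in> IR N f"
begin

lemma amat_iff:
  assumes "i \<in> {1..2*N}" and "j \<in> {1..2*N}"
  shows "amat N f i j \<longleftrightarrow> (N < j \<longleftrightarrow> (N < i) \<noteq> (bar N i \<in> IR N f))"
proof (cases "N < i")
  case True
  then have "i \<notin> IP N f" "i \<notin> IR N f" "i - N \<in> {1..N}"
    using assms(1) IP_subset IR_subset by force+
  then have "i - N \<in> IP N f \<longleftrightarrow> i - N \<notin> IR N f" using IP_or_IR IP_IR_disjoint by blast
  with True assms \<open>i \<notin> IP N f\<close> \<open>i \<notin> IR N f\<close> show ?thesis
    unfolding amat_def bar_def by auto
next
  case False
  then have "i \<in> IP N f \<longleftrightarrow> i \<notin> IR N f" using assms(1) IP_or_IR IP_IR_disjoint by force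
  with False assms show ?thesis unfolding amat_def bar_def by auto
qed

(* Any lift of \<xi> to SigmaA N f changes sheet between times 0 and n exactly parity \<xi> n times,
   modulo 2 (see upper_SigmaA). *)
definition parity :: "seq \<Rightarrow> int \<Rightarrow> bool" where
  "parity \<xi> n \<longleftrightarrow> odd (card {k \<in> {min 0 n..<max 0 n}. \<xi> k \<in> IR N f})"

lemma parity_0: "\<not> parity \<xi> 0"
  by (simp add: parity_def)

lemma parity_plus_one: "parity \<xi> (n + 1) \<longleftrightarrow> parity \<xi> n \<noteq> (\<xi> n \<in> IR N f)"
proof -
  define W where "W m = {k \<in> {min 0 m..<max 0 m}. \<xi> k \<in> IR N f}" for m
  have fin: "finite (W m)" for m
    unfolding W_def by (rule finite_subset[OF _ finite_atLeastLessThan_int]) blast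
  have card_step: "card (if \<xi> n \<in> IR N f then insert n (W m) else W m)
      = (if \<xi> n \<in> IR N f then Suc (card (W m)) else card (W m))" if "n \<notin> W m" for m
    using that fin by simp
  show ?thesis
  proof (cases "0 \<le> n")
    case True
    then have "W (n + 1) = (if \<xi> n \<in> IR N f then insert n (W n) else W n)" "n \<notin> W n"
      unfolding W_def by (auto simp: le_less)
    then show ?thesis using card_step[of n] unfolding parity_def W_def[symmetric] by auto
  next
    case False
    then have "W n = (if \<xi> n \<in> IR N f then insert n (W (n + 1)) else W (n + 1))" "n \<notin> W (n + 1)"
      unfolding W_def by (auto simp: le_less)
    then show ?thesis using card_step[of "n + 1"] unfolding parity_def W_def[symmetric] by auto
  qed
qed

definition lift :: "bool \<Rightarrow> seq \<Rightarrow> seq" where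
  "lift c \<xi> = (\<lambda>n. if c \<noteq> parity \<xi> n then \<xi> n + N else \<xi> n)"

lemma upper_lift:
  assumes "\<xi> \<in> SigmaN N"
  shows "N < lift c \<xi> n \<longleftrightarrow> c \<noteq> parity \<xi> n"
proof -
  have "\<xi> n \<in> {1..N}" using assms unfolding SigmaN_def by blast
  then show ?thesis unfolding lift_def by auto
qed

lemma proj_lift:
  assumes "\<xi> \<in> SigmaN N"
  shows "proj N (lift c \<xi>) = \<xi>"
proof
  fix n
  have "\<xi> n \<in> {1..N}" using assms unfolding SigmaN_def by blast
  then show "proj N (lift c \<xi>) n = \<xi> n" unfolding lift_def proj_def bar_def by auto
qed

lemma lift_SigmaA:
  assumes "\<xi> \<in> SigmaN N"
  shows "lift c \<xi> \<in> SigmaA N f"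
proof -
  have range: "lift c \<xi> n \<in> {1..2*N}" for n
  proof -
    have "\<xi> n \<in> {1..N}" using assms unfolding SigmaN_def by blast
    then show ?thesis unfolding lift_def by auto
  qed
  have "bar N (lift c \<xi> n) = \<xi> n" for n
    using fun_cong[OF proj_lift[OF assms, of c], of n] unfolding proj_def by simp
  moreover have "N < lift c \<xi> (n + 1) \<longleftrightarrow> (N < lift c \<xi> n) \<noteq> (\<xi> n \<in> IR N f)" for n
    using upper_lift[OF assms, of c n] upper_lift[OF assms, of c "n + 1"] parity_plus_one[of \<xi> n] by blast
  ultimately have "amat N f (lift c \<xi> n) (lift c \<xi> (n + 1))" for n
    using range by (simp add: amat_iff)
  then show ?thesis using range unfolding SigmaA_def by blast
qed

lemma upper_SigmaA:
  assumes "\<omega> \<in> SigmaA N f"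
  shows "N < \<omega> n \<longleftrightarrow> (N < \<omega> 0) \<noteq> parity (proj N \<omega>) n"
proof -
  have step: "N < \<omega> (m + 1) \<longleftrightarrow> (N < \<omega> m) \<noteq> (proj N \<omega> m \<in> IR N f)" for m
  proof -
    have "\<omega> m \<in> {1..2*N}" "\<omega> (m + 1) \<in> {1..2*N}" "amat N f (\<omega> m) (\<omega> (m + 1))"
      using assms unfolding SigmaA_def by blast+
    then show ?thesis unfolding proj_def by (simp add: amat_iff)
  qed
  show ?thesis
  proof (induction n rule: int_induct[of _ 0])
    case base then show ?case by (simp add: parity_0)
  next
    case (step1 i) then show ?case using step[of i] parity_plus_one[of _ i] by blast
  next
    case (step2 i)
    have "N < \<omega> i \<longleftrightarrow> (N < \<omega> (i - 1)) \<noteq> (proj N \<omega> (i - 1) \<in> IR N f)"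
      and "parity (proj N \<omega>) i \<longleftrightarrow> parity (proj N \<omega>) (i - 1) \<noteq> (proj N \<omega> (i - 1) \<in> IR N f)"
      using step[of "i - 1"] parity_plus_one[of "proj N \<omega>" "i - 1"] by simp_all
    with step2 show ?case by blast
  qed
qed

lemma lift_proj:
  assumes "\<omega> \<in> SigmaA N f"
  shows "lift (N < \<omega> 0) (proj N \<omega>) = \<omega>"
proof
  fix n
  have "\<omega> n \<in> {1..2*N}" using assms unfolding SigmaA_def by blast
  moreover note upper_SigmaA[OF assms, of n]
  ultimately show "lift (N < \<omega> 0) (proj N \<omega>) n = \<omega> n"
    unfolding lift_def proj_def bar_def by auto
qed

lemma continuous_on_lift: "continuous_on UNIV (lift c)"
proof (rule continuous_on_finitely_determined)
  fix n
  have agree: "lift c \<xi> n = lift c \<eta> n" if "\<forall>k\<in>{min 0 n..max 0 n}. \<xi> k = \<eta> k" for \<xi> \<eta>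
  proof -
    have "{k \<in> {min 0 n..<max 0 n}. \<xi> k \<in> IR N f} = {k \<in> {min 0 n..<max 0 n}. \<eta> k \<in> IR N f}"
      using that by auto
    then have "parity \<xi> n = parity \<eta> n" unfolding parity_def by simp
    moreover have "\<xi> n = \<eta> n" using that by simp
    ultimately show ?thesis unfolding lift_def by simp
  qed
  show "\<exists>K. finite K \<and> (\<forall>\<xi> \<eta>. (\<forall>k\<in>K. \<xi> k = \<eta> k) \<longrightarrow> lift c \<xi> n = lift c \<eta> n)"
    using agree by (intro exI[of _ "{min 0 n..max 0 n}"] conjI finite_atLeastAtMost_int allI impI)
qed

definition Pi_inv :: "bool \<Rightarrow> seq \<times> real \<Rightarrow> seq \<times> real" where
  "Pi_inv c = (\<lambda>(\<xi>, y). (lift c \<xi>, if c then RR y else y))"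

lemma Pi_inv_SigmaA: "fst q \<in> SigmaN N \<Longrightarrow> fst (Pi_inv c q) \<in> SigmaA N f"
  by (auto simp: Pi_inv_def lift_SigmaA split: prod.split)

lemma snd_Pi_inv_II: "snd (Pi_inv c q) \<in> II \<longleftrightarrow> snd q \<in> II"
  by (auto simp: Pi_inv_def II_def RR_def split: prod.split)

lemma Pi_inv_mem_II: "q \<in> SigmaN N \<times> II \<Longrightarrow> Pi_inv c q \<in> SigmaA N f \<times> II"
  using Pi_inv_SigmaA snd_Pi_inv_II by (metis mem_Times_iff)

lemma upper_Pi_inv: "fst q \<in> SigmaN N \<Longrightarrow> N < fst (Pi_inv c q) n \<longleftrightarrow> c \<noteq> parity (fst q) n"
  by (auto simp: Pi_inv_def upper_lift split: prod.split)

lemma Pi_map_Pi_inv: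
  assumes "fst q \<in> SigmaN N"
  shows "Pi_map N (Pi_inv c q) = q"
proof -
  obtain \<xi> y where q: "q = (\<xi>, y)" by fastforce
  have "N < lift c \<xi> 0 \<longleftrightarrow> c" using upper_lift[of \<xi> c 0] assms q by (simp add: parity_0)
  then show ?thesis using proj_lift[of \<xi> c] assms q by (auto simp: Pi_map_def Pi_inv_def RR_def)
qed

lemma Pi_inv_Pi_map:
  assumes "fst p \<in> SigmaA N f"
  shows "Pi_inv (N < fst p 0) (Pi_map N p) = p"
proof -
  obtain \<omega> x where p: "p = (\<omega>, x)" by fastforce
  show ?thesis using lift_proj[of \<omega>] assms p by (auto simp: Pi_map_def Pi_inv_def RR_def)
qed

lemma continuous_on_Pi_inv: "continuous_on UNIV (Pi_inv c)"
proof -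
  have eq: "Pi_inv c = (\<lambda>q. (lift c (fst q), if c then 1 - snd q else snd q))"
    by (simp add: Pi_inv_def RR_def fun_eq_iff split: prod.split)
  have "continuous_on UNIV (\<lambda>q::seq \<times> real. lift c (fst q))"
    by (rule continuous_on_compose2[OF continuous_on_lift continuous_on_fst]) auto
  moreover have "continuous_on UNIV (\<lambda>q::seq \<times> real. if c then 1 - snd q else snd q)"
    by (cases c) (simp_all add: continuous_on_snd continuous_on_diff continuous_on_const)
  ultimately show ?thesis unfolding eq by (rule continuous_on_Pair)
qed

lemma Pi_map_GG:
  assumes "fst p \<in> SigmaA N f"
  shows "Pi_map N (GG N f p) = FF f (Pi_map N p)"
proof -
  obtain \<omega> x where p: "p = (\<omega>, x)" by fastforce
  define i where "i = bar N (\<omega> 0)"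
  have "\<omega> n \<in> {1..2*N} \<and> amat N f (\<omega> n) (\<omega> (n + 1))" for n
    using assms p unfolding SigmaA_def by auto
  from this[of 0] this[of 1] have "\<omega> 0 \<in> {1..2*N}" "\<omega> 1 \<in> {1..2*N}" "amat N f (\<omega> 0) (\<omega> 1)"
    by simp_all
  then have upper_1: "N < \<omega> 1 \<longleftrightarrow> (N < \<omega> 0) \<noteq> (i \<in> IR N f)"
    unfolding i_def by (simp add: amat_iff)
  have "i \<in> {1..N}" using \<open>\<omega> 0 \<in> {1..2*N}\<close> unfolding i_def bar_def by auto
  then have "i \<in> IP N f \<longleftrightarrow> i \<notin> IR N f" using IP_or_IR IP_IR_disjoint by blast
  then have g: "gmap N f (\<omega> 0) = (if N < \<omega> 0 then (if i \<in> IR N f then f i \<circ> RR else RR \<circ> f i \<circ> RR)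
      else (if i \<in> IR N f then RR \<circ> f i else f i))"
    unfolding gmap_def i_def bar_def by auto
  have "Pi_map N (GG N f p)
      = (shift (proj N \<omega>), if N < \<omega> 1 then RR (gmap N f (\<omega> 0) x) else gmap N f (\<omega> 0) x)"
    unfolding p by (simp add: GG_def Pi_map_def shift_def proj_def)
  moreover have "FF f (Pi_map N p) = (shift (proj N \<omega>), f i (if N < \<omega> 0 then RR x else x))"
    unfolding p by (simp add: FF_def Pi_map_def proj_def i_def)
  ultimately show ?thesis
    using upper_1 g by (cases "N < \<omega> 0"; cases "i \<in> IR N f") simp_all
qed

lemma GG_Pi_inv:
  assumes "fst r \<in> SigmaN N"
  shows "GG N f (Pi_inv c r) = Pi_inv (c \<noteq> parity (fst r) 1) (FF f r)"
proof -
  let ?p = "Pi_inv c r"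
  have p: "fst ?p \<in> SigmaA N f" using assms by (rule Pi_inv_SigmaA)
  have "N < fst (GG N f ?p) 0 \<longleftrightarrow> c \<noteq> parity (fst r) 1"
    using upper_Pi_inv[OF assms, of c 1] by (simp add: fst_GG shift_def)
  moreover have "Pi_map N (GG N f ?p) = FF f r"
    using Pi_map_GG[OF p] Pi_map_Pi_inv[OF assms] by simp
  ultimately show ?thesis
    using Pi_inv_Pi_map[OF fst_GG_SigmaA[OF p]] by simp
qed

lemma Pi_map_image_eq:
  assumes "S \<subseteq> SigmaA N f \<times> UNIV"
  shows "Pi_map N ` S = {q. fst q \<in> SigmaN N \<and> (\<exists>c. Pi_inv c q \<in> S)}"
proof
  show "Pi_map N ` S \<subseteq> {q. fst q \<in> SigmaN N \<and> (\<exists>c. Pi_inv c q \<in> S)}"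
  proof
    fix q assume "q \<in> Pi_map N ` S"
    then obtain p where p: "p \<in> S" "q = Pi_map N p" by blast
    then have "p \<in> SigmaA N f \<times> UNIV" using assms by blast
    then have "fst q \<in> SigmaN N" and "Pi_inv (N < fst p 0) q \<in> S"
      using Pi_map_mem_UNIV[of p N f] Pi_inv_Pi_map[of p] p by auto
    then show "q \<in> {q. fst q \<in> SigmaN N \<and> (\<exists>c. Pi_inv c q \<in> S)}" by blast
  qed
  show "{q. fst q \<in> SigmaN N \<and> (\<exists>c. Pi_inv c q \<in> S)} \<subseteq> Pi_map N ` S"
  proof
    fix q assume "q \<in> {q. fst q \<in> SigmaN N \<and> (\<exists>c. Pi_inv c q \<in> S)}"
    then obtain c where "fst q \<in> SigmaN N" "Pi_inv c q \<in> S" by blast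
    then show "q \<in> Pi_map N ` S" using Pi_map_Pi_inv[of q c] by force
  qed
qed

lemma Pi_map_image_GG:
  assumes "A \<subseteq> SigmaA N f \<times> UNIV"
  shows "Pi_map N ` GG N f ` A = FF f ` Pi_map N ` A"
proof -
  have "Pi_map N (GG N f p) = FF f (Pi_map N p)" if "p \<in> A" for p
    using that assms by (intro Pi_map_GG) auto
  then show ?thesis by (simp add: image_image cong: image_cong)
qed

lemma Pi_map_preim_GG:
  assumes "A \<subseteq> SigmaA N f \<times> UNIV"
  shows "Pi_map N ` preim (GG N f) (SigmaA N f \<times> II) A = preim (FF f) (SigmaN N \<times> II) (Pi_map N ` A)"
proof -
  have "preim (GG N f) (SigmaA N f \<times> II) A \<subseteq> SigmaA N f \<times> UNIV"
    unfolding preim_def by auto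
  then have "Pi_map N ` preim (GG N f) (SigmaA N f \<times> II) A
      = {r. fst r \<in> SigmaN N \<and> (\<exists>c. Pi_inv c r \<in> preim (GG N f) (SigmaA N f \<times> II) A)}"
    by (rule Pi_map_image_eq)
  also have "\<dots> = {r \<in> SigmaN N \<times> II. \<exists>c. GG N f (Pi_inv c r) \<in> A}"
    using Pi_inv_SigmaA snd_Pi_inv_II unfolding preim_def by (auto simp: mem_Times_iff)
  also have "\<dots> = {r \<in> SigmaN N \<times> II. \<exists>c. Pi_inv c (FF f r) \<in> A}"
  proof (intro Collect_cong conj_cong refl)
    fix r assume "r \<in> SigmaN N \<times> II"
    then have "fst r \<in> SigmaN N" by auto
    then show "(\<exists>c. GG N f (Pi_inv c r) \<in> A) \<longleftrightarrow> (\<exists>c. Pi_inv c (FF f r) \<in> A)"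
      using ex_bool_xor[of "\<lambda>c. Pi_inv c (FF f r) \<in> A" "parity (fst r) 1"] by (simp only: GG_Pi_inv)
  qed
  also have "\<dots> = preim (FF f) (SigmaN N \<times> II) (Pi_map N ` A)"
    using Pi_map_image_eq[OF assms] fst_FF_SigmaN unfolding preim_def by (auto simp: mem_Times_iff)
  finally show ?thesis .
qed

lemma Pi_map_INT:
  assumes "decseq A" and "A 0 \<subseteq> SigmaA N f \<times> UNIV"
  shows "Pi_map N ` (\<Inter>n. A n) = (\<Inter>n. Pi_map N ` A n)"
proof
  show "(\<Inter>n. Pi_map N ` A n) \<subseteq> Pi_map N ` (\<Inter>n. A n)"
  proof
    fix q assume q: "q \<in> (\<Inter>n. Pi_map N ` A n)"
    have antimono: "A n \<subseteq> A m" if "m \<le> n" for m n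
      using decseqD[OF assms(1) that] .
    have "q \<in> Pi_map N ` A n" for n
      using q by blast
    moreover have "A n \<subseteq> SigmaA N f \<times> UNIV" for n
      using antimono[of 0 n] assms(2) by simp
    ultimately have fibre: "fst q \<in> SigmaN N \<and> (\<exists>c. Pi_inv c q \<in> A n)" for n
      using Pi_map_image_eq by simp
    have "Pi_inv c q \<in> A m" if "m \<le> n" "Pi_inv c q \<in> A n" for c m n
      using that antimono by blast
    then obtain c where "\<forall>n. Pi_inv c q \<in> A n"
      using ex_all_antimono_finite[of "\<lambda>c n. Pi_inv c q \<in> A n"] fibre by blast
    moreover have "q = Pi_map N (Pi_inv c q)"
      using fibre[of 0] Pi_map_Pi_inv by simp
    ultimately show "q \<in> Pi_map N ` (\<Inter>n. A n)" by blast
  qed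
qed blast

lemma Pi_map_rel_int:
  assumes "S \<subseteq> SigmaA N f \<times> II"
  shows "Pi_map N ` rel_int (SigmaA N f \<times> II) S \<subseteq> rel_int (SigmaN N \<times> II) (Pi_map N ` S)"
proof
  fix q assume "q \<in> Pi_map N ` rel_int (SigmaA N f \<times> II) S"
  then obtain p where p: "p \<in> rel_int (SigmaA N f \<times> II) S" "q = Pi_map N p" by blast
  then have "p \<in> SigmaA N f \<times> II" using assms rel_int_subset by blast
  have "Pi_map N p \<in> (top_of_set (SigmaN N \<times> II)) interior_of (Pi_map N ` S)"
  proof (rule interior_of_image_section)
    show "continuous_on UNIV (Pi_inv (N < fst p 0))" by (rule continuous_on_Pi_inv)
    show "Pi_inv (N < fst p 0) ` (SigmaN N \<times> II) \<subseteq> SigmaA N f \<times> II"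
      using Pi_inv_mem_II by blast
    show "Pi_map N (Pi_inv (N < fst p 0) r) = r" if "r \<in> SigmaN N \<times> II" for r
      using that Pi_map_Pi_inv by (simp add: mem_Times_iff)
    show "p \<in> (top_of_set (SigmaA N f \<times> II)) interior_of S"
      using p(1) unfolding rel_int_def .
    show "Pi_map N p \<in> SigmaN N \<times> II"
      using \<open>p \<in> SigmaA N f \<times> II\<close> by (rule Pi_map_mem_II)
    show "Pi_inv (N < fst p 0) (Pi_map N p) = p"
      using \<open>p \<in> SigmaA N f \<times> II\<close> Pi_inv_Pi_map by (simp add: mem_Times_iff)
  qed
  then show "q \<in> rel_int (SigmaN N \<times> II) (Pi_map N ` S)"
    using p(2) by (simp add: rel_int_def)
qed

lemma is_bistrip_Pi_map_image:
  assumes "is_strip (SigmaA N f) S"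
  shows "is_bistrip (SigmaN N) (Pi_map N ` S)"
proof -
  obtain \<phi> \<psi> where bounds: "\<forall>\<omega>\<in>SigmaA N f. 0 \<le> \<phi> \<omega> \<and> \<phi> \<omega> < \<psi> \<omega> \<and> \<psi> \<omega> \<le> 1"
    and S: "S = strip (SigmaA N f) \<phi> \<psi>"
    using assms unfolding is_strip_def by blast
  define lo where "lo c \<xi> = (if c then 1 - \<psi> (lift c \<xi>) else \<phi> (lift c \<xi>))" for c \<xi>
  define hi where "hi c \<xi> = (if c then 1 - \<phi> (lift c \<xi>) else \<psi> (lift c \<xi>))" for c \<xi>
  have sheet_eq: "{q. fst q \<in> SigmaN N \<and> Pi_inv c q \<in> S} = strip (SigmaN N) (lo c) (hi c)" for c
  proof (intro set_eqI)
    fix q :: "seq \<times> real"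
    obtain \<xi> y where q: "q = (\<xi>, y)" by fastforce
    show "q \<in> {q. fst q \<in> SigmaN N \<and> Pi_inv c q \<in> S} \<longleftrightarrow> q \<in> strip (SigmaN N) (lo c) (hi c)"
    proof (cases "\<xi> \<in> SigmaN N")
      case True
      then have "lift c \<xi> \<in> SigmaA N f" by (rule lift_SigmaA)
      then show ?thesis
        using True q by (cases c) (auto simp: S strip_def Pi_inv_def RR_def lo_def hi_def)
    qed (simp add: q strip_def)
  qed
  have "0 \<le> lo c \<xi> \<and> lo c \<xi> < hi c \<xi> \<and> hi c \<xi> \<le> 1" if "\<xi> \<in> SigmaN N" for c \<xi>
    using bspec[OF bounds lift_SigmaA[OF that, of c]] by (auto simp: lo_def hi_def)
  then have sheet: "is_strip (SigmaN N) {q. fst q \<in> SigmaN N \<and> Pi_inv c q \<in> S}" for c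
    unfolding is_strip_def sheet_eq by blast
  have "S \<subseteq> SigmaA N f \<times> UNIV" using strip_subset[OF assms] by blast
  then have "Pi_map N ` S = {q. fst q \<in> SigmaN N \<and> (\<exists>c. Pi_inv c q \<in> S)}"
    by (rule Pi_map_image_eq)
  also have "\<dots> = {q. fst q \<in> SigmaN N \<and> Pi_inv False q \<in> S} \<union> {q. fst q \<in> SigmaN N \<and> Pi_inv True q \<in> S}"
    unfolding ex_bool_eq by blast
  finally show ?thesis
    using sheet unfolding is_bistrip_def by blast
qed

lemma attracting_Pi_map_image:
  assumes S: "S \<subseteq> SigmaA N f \<times> II" and att: "attracting (GG N f) (SigmaA N f \<times> II) S"
  shows "attracting (FF f) (SigmaN N \<times> II) (Pi_map N ` S)"
    and "max_attractor (FF f) (Pi_map N ` S) = Pi_map N ` max_attractor (GG N f) S"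
proof -
  let ?P = "Pow (SigmaA N f \<times> UNIV)"
  have GS: "GG N f ` S \<subseteq> rel_int (SigmaA N f \<times> II) S"
    using att unfolding attracting_def .
  have "FF f ` Pi_map N ` S = Pi_map N ` GG N f ` S"
    using S by (intro Pi_map_image_GG[symmetric]) auto
  also have "\<dots> \<subseteq> Pi_map N ` rel_int (SigmaA N f \<times> II) S"
    using GS by (rule image_mono)
  also have "\<dots> \<subseteq> rel_int (SigmaN N \<times> II) (Pi_map N ` S)"
    using S by (rule Pi_map_rel_int)
  finally show "attracting (FF f) (SigmaN N \<times> II) (Pi_map N ` S)"
    unfolding attracting_def .
  have iter: "Pi_map N ` (((`) (GG N f) ^^ n) S) = ((`) (FF f) ^^ n) (Pi_map N ` S)" for n
  proof (rule funpow_semiconj[where P = ?P])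
    show "GG N f ` A \<in> ?P" if "A \<in> ?P" for A
      using that GG_mem_UNIV by blast
  qed (use S Pi_map_image_GG in auto)
  have "decseq (\<lambda>n. ((`) (GG N f) ^^ n) S)"
    using GS rel_int_subset by (intro decseq_funpow) (auto simp: mono_def)
  then show "max_attractor (FF f) (Pi_map N ` S) = Pi_map N ` max_attractor (GG N f) S"
    unfolding max_attractor_def iter[symmetric] using S by (subst Pi_map_INT) auto
qed

lemma repelling_Pi_map_image:
  assumes S: "S \<subseteq> SigmaA N f \<times> II" and rep: "repelling (GG N f) (SigmaA N f \<times> II) S"
  shows "repelling (FF f) (SigmaN N \<times> II) (Pi_map N ` S)"
    and "max_repeller (FF f) (SigmaN N \<times> II) (Pi_map N ` S)
      = Pi_map N ` max_repeller (GG N f) (SigmaA N f \<times> II) S"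
proof -
  let ?X = "SigmaA N f \<times> II" and ?Y = "SigmaN N \<times> II" and ?P = "Pow (SigmaA N f \<times> UNIV)"
  have onto: "S \<subseteq> GG N f ` ?X" and GS: "preim (GG N f) ?X S \<subseteq> rel_int ?X S"
    using rep unfolding repelling_def by blast+
  have "Pi_map N ` S \<subseteq> Pi_map N ` GG N f ` ?X"
    using onto by (rule image_mono)
  also have "\<dots> = FF f ` Pi_map N ` ?X"
    by (rule Pi_map_image_GG) auto
  also have "\<dots> \<subseteq> FF f ` ?Y"
    using Pi_map_mem_II by blast
  finally have "Pi_map N ` S \<subseteq> FF f ` ?Y" .
  moreover have "preim (FF f) ?Y (Pi_map N ` S) = Pi_map N ` preim (GG N f) ?X S"
    using S by (intro Pi_map_preim_GG[symmetric]) auto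
  moreover have "\<dots> \<subseteq> Pi_map N ` rel_int ?X S"
    using GS by (rule image_mono)
  moreover have "\<dots> \<subseteq> rel_int ?Y (Pi_map N ` S)"
    using S by (rule Pi_map_rel_int)
  ultimately show "repelling (FF f) ?Y (Pi_map N ` S)"
    unfolding repelling_def by auto
  have iter: "Pi_map N ` ((preim (GG N f) ?X ^^ n) S) = (preim (FF f) ?Y ^^ n) (Pi_map N ` S)" for n
  proof (rule funpow_semiconj[where P = ?P])
    show "preim (GG N f) ?X A \<in> ?P" for A
      unfolding preim_def by auto
  qed (use S Pi_map_preim_GG in auto)
  have "decseq (\<lambda>n. (preim (GG N f) ?X ^^ n) S)"
    using GS rel_int_subset by (intro decseq_funpow) (auto simp: mono_def preim_def)
  then show "max_repeller (FF f) ?Y (Pi_map N ` S) = Pi_map N ` max_repeller (GG N f) ?X S"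
    unfolding max_repeller_def iter[symmetric] using S by (subst Pi_map_INT) auto
qed

end

theorem lemma3p10:
  fixes N :: nat and f :: "nat \<Rightarrow> real \<Rightarrow> real" and S :: "(seq \<times> real) set"
  assumes "N \<ge> 1"
    and "\<forall>i\<in>{1..N}. C1_diffeo_onto_image (f i)"
    and "is_strip (SigmaA N f) S"
  shows "(attracting (GG N f) (SigmaA N f \<times> II) S \<longrightarrow>
            is_bistrip (SigmaN N) (Pi_map N ` S)
          \<and> attracting (FF f) (SigmaN N \<times> II) (Pi_map N ` S)
          \<and> max_attractor (FF f) (Pi_map N ` S) = Pi_map N ` max_attractor (GG N f) S)
       \<and> (repelling (GG N f) (SigmaA N f \<times> II) S \<longrightarrow>
            is_bistrip (SigmaN N) (Pi_map N ` S)
          \<and> repelling (FF f) (SigmaN N \<times> II) (Pi_map N ` S)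
          \<and> max_repeller (FF f) (SigmaN N \<times> II) (Pi_map N ` S)
              = Pi_map N ` max_repeller (GG N f) (SigmaA N f \<times> II) S)"
proof -
  interpret oriented_fibre_maps N f
    using assms(2) C1_diffeo_IP_or_IR by unfold_locales blast
  have S: "S \<subseteq> SigmaA N f \<times> II" using assms(3) by (rule strip_subset)
  show ?thesis
    using is_bistrip_Pi_map_image[OF assms(3)] attracting_Pi_map_image[OF S]
      repelling_Pi_map_image[OF S] by blast
qed

end
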